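(* Let $m,n,u,v\in\mathbb{R}$ with $m+v\neq0$ and $mu+nv=0$, and let $(G_5,g,J)$ be the three-dimensional Lorentzian Lie group described in the context. Then every left-invariant vector field $\xi=\lambda_1\overline{e}_1+\lambda_2\overline{e}_2+\lambda_3\overline{e}_3$ ($\lambda_1,\lambda_2,\lambda_3\in\mathbb{R}$ arbitrary constants) is a left-invariant Ricci collineation of $(G_5,g,J)$ associated to the Yano connection $\nabla^{*}$.
   Context: $G_5$ is a connected three-dimensional Lie group whose Lie algebra has a basis $\{\overline{e}_1,\overline{e}_2,\overline{e}_3\}$ (left-invariant vector fields) with $[\overline{e}_1,\overline{e}_2]=0$, $[\overline{e}_1,\overline{e}_3]=m\overline{e}_1+n\overline{e}_2$, $[\overline{e}_2,\overline{e}_3]=u\overline{e}_1+v\overline{e}_2$, where $m+v\neq0$ and $mu+nv=0$. The metric $g$ is the left-invariant Lorentzian metric with $g(\overline{e}_1,\overline{e}_1)=g(\overline{e}_2,\overline{e}_2)=1$, $g(\overline{e}_3,\overline{e}_3)=-1$, $g(\overline{e}_i,\overline{e}_j)=0$ for $i\neq j$. $J$ is the left-invariant product structure with $J\overline{e}_1=\overline{e}_1$, $J\overline{e}_2=\overline{e}_2$, $J\overline{e}_3=-\overline{e}_3$. With $\nabla^{LC}$ the Levi-Civita connection of $g$, the Yano connection is $\nabla^{*}_XY=\nabla^{LC}_XY-\frac12(\nabla^{LC}_YJ)JX-\frac14[(\nabla^{LC}_XJ)JY-(\nabla^{LC}_{JX}J)Y]$; its curvature is $R^{*}(X,Y)Z=\nabla^{*}_X\nabla^{*}_YZ-\nabla^{*}_Y\nabla^{*}_XZ-\nabla^{*}_{[X,Y]}Z$;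 its Ricci tensor is $\mathrm{Ric}^{*}(X,Y)=-g(R^{*}(X,\overline{e}_1)Y,\overline{e}_1)-g(R^{*}(X,\overline{e}_2)Y,\overline{e}_2)+g(R^{*}(X,\overline{e}_3)Y,\overline{e}_3)$; and $\overline{\mathrm{Ric}^{*}}(X,Y)=\frac12(\mathrm{Ric}^{*}(X,Y)+\mathrm{Ric}^{*}(Y,X))$. For a left-invariant vector field $\xi$, $(\mathrm{L}_{\xi}\overline{\mathrm{Ric}^{*}})(X,Y)=\xi(\overline{\mathrm{Ric}^{*}}(X,Y))-\overline{\mathrm{Ric}^{*}}([\xi,X],Y)-\overline{\mathrm{Ric}^{*}}(X,[\xi,Y])$; $\xi$ is a left-invariant Ricci collineation if $\mathrm{L}_{\xi}\overline{\mathrm{Ric}^{*}}=0$. *)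

theory Defs
  imports "HOL-Analysis.Analysis"
begin

text \<open>Left-invariant vector fields on G_5 are identified with their (constant) coefficient
vectors X = X$1 e1 + X$2 e2 + X$3 e3 with respect to the basis e1, e2, e3
(the index type 3 has elements 1, 2, 3 = 0).\<close>

definition E :: "3 \<Rightarrow> real^3" where
  "E i = axis i 1"

abbreviation e1 :: "real^3" where "e1 \<equiv> E 1"
abbreviation e2 :: "real^3" where "e2 \<equiv> E 2"
abbreviation e3 :: "real^3" where "e3 \<equiv> E 3"

definition brE :: "real \<Rightarrow> real \<Rightarrow> real \<Rightarrow> real \<Rightarrow> 3 \<Rightarrow> 3 \<Rightarrow> real^3" where
  "brE m n u v i j =
     (if i = 1 \<and> j = 3 then m *\<^sub>R e1 + n *\<^sub>R e2
      else if i = 3 \<and> j = 1 then - (m *\<^sub>R e1 + n *\<^sub>R e2)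
      else if i = 2 \<and> j = 3 then u *\<^sub>R e1 + v *\<^sub>R e2
      else if i = 3 \<and> j = 2 then - (u *\<^sub>R e1 + v *\<^sub>R e2)
      else 0)"

definition br :: "real \<Rightarrow> real \<Rightarrow> real \<Rightarrow> real \<Rightarrow> real^3 \<Rightarrow> real^3 \<Rightarrow> real^3" where
  "br m n u v X Y = (\<Sum>i\<in>UNIV. \<Sum>j\<in>UNIV. (X$i * Y$j) *\<^sub>R brE m n u v i j)"

definition gL :: "real^3 \<Rightarrow> real^3 \<Rightarrow> real" where
  "gL X Y = X$1 * Y$1 + X$2 * Y$2 - X$3 * Y$3"

definition epsE :: "3 \<Rightarrow> real" where
  "epsE k = gL (E k) (E k)"

definition Jst :: "real^3 \<Rightarrow> real^3" where
  "Jst X = (\<chi> i. if i = 3 then - (X$i) else X$i)"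

text \<open>Levi-Civita connection on left-invariant fields via the Koszul formula
 2 g(\<nabla>_X Y, Z) = g([X,Y],Z) - g([Y,Z],X) + g([Z,X],Y),
 expanded in the g-orthonormal basis e1, e2, e3.\<close>
definition LC :: "real \<Rightarrow> real \<Rightarrow> real \<Rightarrow> real \<Rightarrow> real^3 \<Rightarrow> real^3 \<Rightarrow> real^3" where
  "LC m n u v X Y = (\<Sum>k\<in>UNIV. (epsE k *
      ((gL (br m n u v X Y) (E k) - gL (br m n u v Y (E k)) X + gL (br m n u v (E k) X) Y) / 2))
      *\<^sub>R E k)"

definition nablaJ :: "real \<Rightarrow> real \<Rightarrow> real \<Rightarrow> real \<Rightarrow> real^3 \<Rightarrow> real^3 \<Rightarrow> real^3" where
  "nablaJ m n u v X Y = LC m n u v X (Jst Y) - Jst (LC m n u v X Y)"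

definition Yano :: "real \<Rightarrow> real \<Rightarrow> real \<Rightarrow> real \<Rightarrow> real^3 \<Rightarrow> real^3 \<Rightarrow> real^3" where
  "Yano m n u v X Y = LC m n u v X Y - (1/2) *\<^sub>R nablaJ m n u v Y (Jst X)
     - (1/4) *\<^sub>R (nablaJ m n u v X (Jst Y) - nablaJ m n u v (Jst X) Y)"

definition Rstar :: "real \<Rightarrow> real \<Rightarrow> real \<Rightarrow> real \<Rightarrow> real^3 \<Rightarrow> real^3 \<Rightarrow> real^3 \<Rightarrow> real^3" where
  "Rstar m n u v X Y Z = Yano m n u v X (Yano m n u v Y Z) - Yano m n u v Y (Yano m n u v X Z)
     - Yano m n u v (br m n u v X Y) Z"

definition RicStar :: "real \<Rightarrow> real \<Rightarrow> real \<Rightarrow> real \<Rightarrow> real^3 \<Rightarrow> real^3 \<Rightarrow> real" where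
  "RicStar m n u v X Y = - gL (Rstar m n u v X e1 Y) e1 - gL (Rstar m n u v X e2 Y) e2
     + gL (Rstar m n u v X e3 Y) e3"

definition RicSym :: "real \<Rightarrow> real \<Rightarrow> real \<Rightarrow> real \<Rightarrow> real^3 \<Rightarrow> real^3 \<Rightarrow> real" where
  "RicSym m n u v X Y = (RicStar m n u v X Y + RicStar m n u v Y X) / 2"

text \<open>The term \<xi>(Ric(X,Y)) is the derivative of a constant function
 (all ingredients are left-invariant) and is therefore 0.\<close>
definition LieRicSym :: "real \<Rightarrow> real \<Rightarrow> real \<Rightarrow> real \<Rightarrow> real^3 \<Rightarrow> real^3 \<Rightarrow> real^3 \<Rightarrow> real" where
  "LieRicSym m n u v \<xi> X Y = 0 - RicSym m n u v (br m n u v \<xi> X) Y - RicSym m n u v X (br m n u v \<xi> Y)"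

definition left_inv_Ricci_collineation :: "real \<Rightarrow> real \<Rightarrow> real \<Rightarrow> real \<Rightarrow> real^3 \<Rightarrow> bool" where
  "left_inv_Ricci_collineation m n u v \<xi> \<longleftrightarrow> (\<forall>X Y. LieRicSym m n u v \<xi> X Y = 0)"

end

theory Submission
  imports Defs
begin

(* Writing A for the matrix with columns (m, n) and (u, v), the Koszul formula makes the Yano
connection collapse to \<nabla>*_X Y = - X\<^sup>3 A (Y\<^sup>1, Y\<^sup>2), with no e3-component.  Hence
\<nabla>*_X \<nabla>*_Y Z = X\<^sup>3 Y\<^sup>3 A\<^sup>2 Z is symmetric in X and Y, and \<nabla>*_[X,Y] = 0 because
brackets have no e3-component: the Yano connection is flat.  So Ric* vanishes and every
left-invariant field is a Ricci collineation. *)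

lemma E_nth: "E i $ j = (if j = i then 1 else 0)"
  by (simp add: E_def axis_def)

lemma br_nth:
  "br m n u v X Y $ 1 = m * (X$1 * Y$3 - X$3 * Y$1) + u * (X$2 * Y$3 - X$3 * Y$2)"
  "br m n u v X Y $ 2 = n * (X$1 * Y$3 - X$3 * Y$1) + v * (X$2 * Y$3 - X$3 * Y$2)"
  "br m n u v X Y $ 3 = 0"
  by (simp_all add: br_def sum_3 brE_def E_nth algebra_simps)

lemma Jst_nth: "Jst X $ 1 = X$1" "Jst X $ 2 = X$2" "Jst X $ 3 = - X$3"
  by (simp_all add: Jst_def)

lemma epsE_simps: "epsE 1 = 1" "epsE 2 = 1" "epsE 3 = -1"
  by (simp_all add: epsE_def gL_def E_nth)

lemma LC_nth:
  "LC m n u v X Y $ 1 = m * X$1 * Y$3 + (n + u) / 2 * X$2 * Y$3 + (n - u) / 2 * X$3 * Y$2"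
  "LC m n u v X Y $ 2 = (n + u) / 2 * X$1 * Y$3 + v * X$2 * Y$3 - (n - u) / 2 * X$3 * Y$1"
  "LC m n u v X Y $ 3 = m * X$1 * Y$1 + (n + u) / 2 * (X$1 * Y$2 + X$2 * Y$1) + v * X$2 * Y$2"
  by (simp_all add: LC_def sum_3 E_nth epsE_simps gL_def br_nth) (simp_all add: algebra_simps divide_simps)

lemma Yano_nth:
  "Yano m n u v X Y $ 1 = - X$3 * (m * Y$1 + u * Y$2)"
  "Yano m n u v X Y $ 2 = - X$3 * (n * Y$1 + v * Y$2)"
  "Yano m n u v X Y $ 3 = 0"
  by (simp_all add: Yano_def nablaJ_def LC_nth Jst_nth) (simp_all add: field_simps)

lemma Yano_eq_0_if_nth3_eq_0:
  assumes "X $ 3 = 0"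
  shows "Yano m n u v X Y = 0"
  by (simp add: vec_eq_iff forall_3 Yano_nth assms)

lemma Yano_Yano_commute:
  "Yano m n u v X (Yano m n u v Y Z) = Yano m n u v Y (Yano m n u v X Z)"
  by (simp add: vec_eq_iff forall_3 Yano_nth algebra_simps)

lemma Rstar_eq_0: "Rstar m n u v X Y Z = 0"
  by (simp add: Rstar_def Yano_Yano_commute Yano_eq_0_if_nth3_eq_0 br_nth)

lemma RicSym_eq_0: "RicSym m n u v X Y = 0"
  by (simp add: RicSym_def RicStar_def Rstar_eq_0 gL_def)

lemma left_inv_Ricci_collineation_all: "left_inv_Ricci_collineation m n u v \<xi>"
  by (simp add: left_inv_Ricci_collineation_def LieRicSym_def RicSym_eq_0)

theorem theorem4p3:
  fixes m n u v l1 l2 l3 :: real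
  assumes "m + v \<noteq> 0" and "m * u + n * v = 0"
  shows "left_inv_Ricci_collineation m n u v (l1 *\<^sub>R e1 + l2 *\<^sub>R e2 + l3 *\<^sub>R e3)"
  by (rule left_inv_Ricci_collineation_all)

end
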